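(* Let $N\ge5$, $N\not\equiv1\pmod3$. For a generic twisted $(N,1)$ spiral, the shift map satisfies $\mathcal S(A_i)=A_{i+1}$ for $i=0,1,\dots,N-2$; that is, $\widehat c_{i+1}+\widehat a_{i+1}\widehat b_i=c_{i+1}+a_{i+1}b_i$ for these $i$.
   Context: Points lie in $\mathbb{RP}^2$; $M\in PSL(3,\mathbb R)$ is identified with a representing matrix in $SL(3,\mathbb R)$. For a bi-infinite sequence $(p_k)_{k\in\mathbb Z}$ in $\mathbb{RP}^2$, $T(p_k)=\overline{p_{k-1}p_{k+1}}\cap\overline{p_kp_{k+2}}$. A twisted $(N,1)$ pentagram spiral with monodromy $M$ is a bi-infinite sequence $(p_k)$ with $p_{N+k}=M\cdot T(p_{k-1})$ for all $k$, such that $p_{N+1}$ lies on the segment joining $p_N$ and $M\cdot p_1$; its seed is $\{p_1,\dots,p_N;p_{N+1}\}$; "generic" means all determinants and denominators appearing are nonzero. For vectors define $T(V_i)=(V_{i-1}\times V_{i+1})\times(V_i\times V_{i+2})$, $\overline T(V_i)=c_{i+1}(V_i\times V_{i+1})\times(V_{i-2}\times V_{i-1})$, $c_i=\det(V_{i+1},V_{i+2},V_{i+3})/\det(V_i,V_{i+1},V_{i+2})$. The normalized lift is the unique sequence $V_k$ with $[V_k]=p_k$, $V_{N+i}=MT(V_{i-1})$ and $V_{-i}=M^{-1}\overline T(V_{N-i+1})$ for $i\ge1$, and $\det(V_i,V_{i+1},V_{i+2})=1$ for $i=0,\dots,N$. Invariants: $V_{i+3}=a_iV_{i+2}+b_iV_{i+1}+c_iV_i$;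 $A_i=c_i+a_ib_{i-1}$. The shift map $\mathcal S$ sends the spiral to the same sequence with seed $\{p_2,\dots,p_{N+1};p_{N+2}\}$, whose normalized lift $(\widehat V_i)$ satisfies $[\widehat V_i]=p_i$, $\det(\widehat V_i,\widehat V_{i+1},\widehat V_{i+2})=1$ for $i=1,\dots,N+1$, $\widehat V_{N+1+i}=MT(\widehat V_i)$, $\widehat V_{1-i}=M^{-1}\overline T(\widehat V_{N+2-i})$ for $i\ge1$; hatted invariants are defined by $\widehat V_{i+3}=\widehat a_i\widehat V_{i+2}+\widehat b_i\widehat V_{i+1}+\widehat c_i\widehat V_i$. In coordinates $\mathcal S(a_i)=\widehat a_{i+1}$, $\mathcal S(b_i)=\widehat b_{i+1}$, $\mathcal S(c_i)=\widehat c_{i+1}$. *)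

theory Defs
  imports "HOL-Analysis.Analysis"
begin

text \<open>Points of RP^2 are represented by nonzero vectors of real^3; two vectors
represent the same point iff they are nonzero and proportional.\<close>

definition proj_eq :: "real^3 \<Rightarrow> real^3 \<Rightarrow> bool" where
  "proj_eq u v \<longleftrightarrow> u \<noteq> 0 \<and> v \<noteq> 0 \<and> (\<exists>t. t \<noteq> 0 \<and> u = t *\<^sub>R v)"

definition det3 :: "real^3 \<Rightarrow> real^3 \<Rightarrow> real^3 \<Rightarrow> real" where
  "det3 u v w = det (vector [u, v, w] :: real^3^3)"

definition Tv :: "(int \<Rightarrow> real^3) \<Rightarrow> int \<Rightarrow> real^3" where
  "Tv V i = cross3 (cross3 (V (i - 1)) (V (i + 1))) (cross3 (V i) (V (i + 2)))"

definition cinv :: "(int \<Rightarrow> real^3) \<Rightarrow> int \<Rightarrow> real" where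
  "cinv V i = det3 (V (i + 1)) (V (i + 2)) (V (i + 3)) / det3 (V i) (V (i + 1)) (V (i + 2))"

definition Tbar :: "(int \<Rightarrow> real^3) \<Rightarrow> int \<Rightarrow> real^3" where
  "Tbar V i = cinv V (i + 1) *\<^sub>R cross3 (cross3 (V i) (V (i + 1))) (cross3 (V (i - 2)) (V (i - 1)))"

text \<open>Generic twisted (N,1) pentagram spiral with monodromy M, given by
representative vectors p k of the points p_k.  The point T(p_k) is the class of
the vector Tv p k (intersection of the lines p_{k-1}p_{k+1} and p_k p_{k+2}).\<close>
definition generic_twisted_spiral :: "nat \<Rightarrow> real^3^3 \<Rightarrow> (int \<Rightarrow> real^3) \<Rightarrow> bool" where
  "generic_twisted_spiral N M p \<longleftrightarrow>
     det M = 1 \<and>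
     (\<forall>k. p k \<noteq> 0) \<and>
     (\<forall>k. det3 (p k) (p (k + 1)) (p (k + 2)) \<noteq> 0) \<and>
     (\<forall>k. proj_eq (p (int N + k)) (M *v Tv p (k - 1))) \<and>
     det3 (p (int N)) (p (int N + 1)) (M *v p 1) = 0"

text \<open>Normalized lift of the spiral for the seed {p_1..p_N; p_{N+1}}.\<close>
definition normalized_lift :: "nat \<Rightarrow> real^3^3 \<Rightarrow> (int \<Rightarrow> real^3) \<Rightarrow> (int \<Rightarrow> real^3) \<Rightarrow> bool" where
  "normalized_lift N M p V \<longleftrightarrow>
     (\<forall>k. proj_eq (V k) (p k)) \<and>
     (\<forall>i::int. 1 \<le> i \<longrightarrow> V (int N + i) = M *v Tv V (i - 1)) \<and>
     (\<forall>i::int. 1 \<le> i \<longrightarrow> V (- i) = matrix_inv M *v Tbar V (int N - i + 1)) \<and>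
     (\<forall>i::int. 0 \<le> i \<and> i \<le> int N \<longrightarrow> det3 (V i) (V (i + 1)) (V (i + 2)) = 1)"

text \<open>Normalized lift of the shifted spiral (seed {p_2..p_{N+1}; p_{N+2}}).\<close>
definition shifted_normalized_lift :: "nat \<Rightarrow> real^3^3 \<Rightarrow> (int \<Rightarrow> real^3) \<Rightarrow> (int \<Rightarrow> real^3) \<Rightarrow> bool" where
  "shifted_normalized_lift N M p W \<longleftrightarrow>
     (\<forall>k. proj_eq (W k) (p k)) \<and>
     (\<forall>i::int. 1 \<le> i \<longrightarrow> W (int N + 1 + i) = M *v Tv W i) \<and>
     (\<forall>i::int. 1 \<le> i \<longrightarrow> W (1 - i) = matrix_inv M *v Tbar W (int N + 2 - i)) \<and>
     (\<forall>i::int. 1 \<le> i \<and> i \<le> int N + 1 \<longrightarrow> det3 (W i) (W (i + 1)) (W (i + 2)) = 1)"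

definition invariants :: "(int \<Rightarrow> real^3) \<Rightarrow> (int \<Rightarrow> real) \<Rightarrow> (int \<Rightarrow> real) \<Rightarrow> (int \<Rightarrow> real) \<Rightarrow> bool" where
  "invariants V a b c \<longleftrightarrow>
     (\<forall>i. V (i + 3) = a i *\<^sub>R V (i + 2) + b i *\<^sub>R V (i + 1) + c i *\<^sub>R V i)"

end

theory Submission
  imports Defs
begin

(* Both lifts V and W represent the same points p_k, so W_k = l_k V_k for
   nonzero scalars l_k.  Both lifts are normalized (det of consecutive triples = 1) on the
   overlap of their normalization ranges, which yields l_j l_{j+1} l_{j+2} = 1 there; comparing
   two consecutive such products gives the 3-periodicity l_{j+3} = l_j.  Rescaling a lift
   rescales the coefficients of the linear recurrence V_{j+3} = a_j V_{j+2} + b_j V_{j+1} + c_j V_j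
   by ratios of the l's (using linear independence of consecutive triples).  Periodicity makes
   these ratios cancel in c_{i+1} and in the product a_{i+1} b_i, so A_{i+1} = c_{i+1} + a_{i+1} b_i
   is unchanged.  Only the facts that both lifts represent p, their normalization conditions and
   the two recurrences enter the argument. *)

lemma det3_expand:
  "det3 u v w = u$1 * v$2 * w$3 - u$1 * v$3 * w$2 - u$2 * v$1 * w$3
    + u$2 * v$3 * w$1 + u$3 * v$1 * w$2 - u$3 * v$2 * w$1"
  unfolding det3_def det_3 by (simp add: vector_1 vector_2 vector_3 algebra_simps)

lemma det3_scale: "det3 (x *\<^sub>R u) (y *\<^sub>R v) (z *\<^sub>R w) = x * y * z * det3 u v w"
  unfolding det3_expand by (simp add: algebra_simps)

lemma det3_nonzero_independent:
  assumes "det3 u v w \<noteq> 0" and "x *\<^sub>R u + y *\<^sub>R v + z *\<^sub>R w = 0"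
  shows "x = 0 \<and> y = 0 \<and> z = 0"
proof -
  have comp: "x * u$k + y * v$k + z * w$k = 0" for k
    using arg_cong[OF assms(2), of "\<lambda>q. q$k"] by simp
  have "x * det3 u v w = 0" "y * det3 u v w = 0" "z * det3 u v w = 0"
    unfolding det3_expand using comp[of 1] comp[of 2] comp[of 3] by algebra+
  with assms(1) show ?thesis by simp
qed

lemma lifts_proportional:
  assumes "\<forall>k. proj_eq (V k) (p k)" and "\<forall>k. proj_eq (W k) (p k)"
  obtains l where "\<And>k. W k = l k *\<^sub>R V k" and "\<And>k. l k \<noteq> 0"
proof -
  have "\<exists>t. W k = t *\<^sub>R V k \<and> t \<noteq> 0" for k
  proof -
    obtain s where s: "s \<noteq> 0" "V k = s *\<^sub>R p k" using assms(1) unfolding proj_eq_def by blast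
    obtain t where t: "t \<noteq> 0" "W k = t *\<^sub>R p k" using assms(2) unfolding proj_eq_def by blast
    have "W k = (t / s) *\<^sub>R V k" using s t by simp
    with s t show ?thesis by (intro exI[of _ "t / s"]) simp
  qed
  then obtain l where "\<forall>k. W k = l k *\<^sub>R V k \<and> l k \<noteq> 0" by metis
  with that show ?thesis by blast
qed

lemma normalized_rescaling_triple:
  assumes "\<And>k. W k = l k *\<^sub>R V k"
    and "det3 (V j) (V (j + 1)) (V (j + 2)) = 1" and "det3 (W j) (W (j + 1)) (W (j + 2)) = 1"
  shows "l j * l (j + 1) * l (j + 2) = 1"
  using assms(2,3) by (simp only: assms(1) det3_scale)

lemma triple_products_period:
  fixes l :: "int \<Rightarrow> real"
  assumes "\<And>k. l k \<noteq> 0"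
    and "l j * l (j + 1) * l (j + 2) = 1" and "l (j + 1) * l (j + 2) * l (j + 3) = 1"
  shows "l (j + 3) = l j"
proof -
  have "(l (j + 1) * l (j + 2)) * l (j + 3) = (l (j + 1) * l (j + 2)) * l j"
    using assms(2,3) by (simp add: algebra_simps)
  moreover have "l (j + 1) * l (j + 2) \<noteq> 0" using assms(1) by simp
  ultimately show ?thesis by simp
qed

lemma recurrence_coefficients_rescale:
  assumes "\<And>k. W k = l k *\<^sub>R V k"
    and "det3 (V j) (V (j + 1)) (V (j + 2)) \<noteq> 0"
    and V: "V (j + 3) = a *\<^sub>R V (j + 2) + b *\<^sub>R V (j + 1) + c *\<^sub>R V j"
    and W: "W (j + 3) = a' *\<^sub>R W (j + 2) + b' *\<^sub>R W (j + 1) + c' *\<^sub>R W j"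
  shows "l (j + 3) * a = a' * l (j + 2) \<and> l (j + 3) * b = b' * l (j + 1) \<and> l (j + 3) * c = c' * l j"
proof -
  have "l (j + 3) *\<^sub>R (a *\<^sub>R V (j + 2) + b *\<^sub>R V (j + 1) + c *\<^sub>R V j)
      = a' *\<^sub>R (l (j + 2) *\<^sub>R V (j + 2)) + b' *\<^sub>R (l (j + 1) *\<^sub>R V (j + 1)) + c' *\<^sub>R (l j *\<^sub>R V j)"
    using W by (simp only: assms(1) V)
  then have "(l (j + 3) * c - c' * l j) *\<^sub>R V j + (l (j + 3) * b - b' * l (j + 1)) *\<^sub>R V (j + 1)
      + (l (j + 3) * a - a' * l (j + 2)) *\<^sub>R V (j + 2) = 0"
    by (simp add: algebra_simps)
  from det3_nonzero_independent[OF assms(2) this] show ?thesis by simp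
qed

lemma A_invariant_rescale:
  fixes l :: "int \<Rightarrow> real"
  assumes "\<And>k. l k \<noteq> 0" and period: "l (i + 4) = l (i + 1)"
    and step0: "l (i + 3) * b = b' * l (i + 1)"
    and step1: "l (i + 4) * a = a' * l (i + 3)" "l (i + 4) * c = c' * l (i + 1)"
  shows "c' + a' * b' = c + a * b"
proof -
  have "c = c'" using step1(2) period assms(1)[of "i + 1"] by simp
  moreover have "a * b = a' * b'"
  proof -
    have "l (i + 1) * l (i + 3) * (a * b) = (l (i + 4) * a) * (l (i + 3) * b)"
      using period by (simp add: algebra_simps)
    also have "\<dots> = l (i + 1) * l (i + 3) * (a' * b')"
      using step0 step1(1) by (simp add: algebra_simps)
    finally show ?thesis using assms(1)[of "i + 1"] assms(1)[of "i + 3"] by simp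
  qed
  ultimately show ?thesis by simp
qed

theorem mainTheorem13:
  fixes N :: nat and M :: "real^3^3" and p V W :: "int \<Rightarrow> real^3"
    and a b c ah bh ch :: "int \<Rightarrow> real"
  assumes "N \<ge> 5" and "N mod 3 \<noteq> 1"
    and "generic_twisted_spiral N M p"
    and "normalized_lift N M p V"
    and "shifted_normalized_lift N M p W"
    and "invariants V a b c"
    and "invariants W ah bh ch"
  shows "\<forall>i::int. 0 \<le> i \<and> i \<le> int N - 2 \<longrightarrow>
           ch (i + 1) + ah (i + 1) * bh i = c (i + 1) + a (i + 1) * b i"
proof (intro allI impI)
  fix i :: int assume i: "0 \<le> i \<and> i \<le> int N - 2"
  have dV: "\<And>j. 0 \<le> j \<Longrightarrow> j \<le> int N \<Longrightarrow> det3 (V j) (V (j + 1)) (V (j + 2)) = 1"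
   and dW: "\<And>j. 1 \<le> j \<Longrightarrow> j \<le> int N + 1 \<Longrightarrow> det3 (W j) (W (j + 1)) (W (j + 2)) = 1"
    using assms(4,5) unfolding normalized_lift_def shifted_normalized_lift_def by blast+
  obtain l where l: "\<And>k. W k = l k *\<^sub>R V k" and l_nz: "\<And>k. l k \<noteq> 0"
    using lifts_proportional assms(4,5)
    unfolding normalized_lift_def shifted_normalized_lift_def by metis
  have triple: "l j * l (j + 1) * l (j + 2) = 1" if "1 \<le> j" "j \<le> int N" for j
    using normalized_rescaling_triple[of W l V j, OF l] dV dW that by simp
  have period: "l (i + 4) = l (i + 1)"
    using triple_products_period[OF l_nz, where j = "i + 1"] triple[of "i + 1"] triple[of "i + 2"]
      i assms(1) by (simp add: add.assoc)
  have coef: "l (j + 3) * a j = ah j * l (j + 2) \<and> l (j + 3) * b j = bh j * l (j + 1)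
      \<and> l (j + 3) * c j = ch j * l j" if "0 \<le> j" "j \<le> int N" for j
  proof (rule recurrence_coefficients_rescale[of W l V j, OF l])
    show "det3 (V j) (V (j + 1)) (V (j + 2)) \<noteq> 0" using dV[OF that] by simp
    show "V (j + 3) = a j *\<^sub>R V (j + 2) + b j *\<^sub>R V (j + 1) + c j *\<^sub>R V j"
      using assms(6) unfolding invariants_def by blast
    show "W (j + 3) = ah j *\<^sub>R W (j + 2) + bh j *\<^sub>R W (j + 1) + ch j *\<^sub>R W j"
      using assms(7) unfolding invariants_def by blast
  qed
  show "ch (i + 1) + ah (i + 1) * bh i = c (i + 1) + a (i + 1) * b i"
    using A_invariant_rescale[OF l_nz period] coef[of i] coef[of "i + 1"] i
    by (simp add: add.assoc)
qed

end
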